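(* Let $E=\mathbb{Q}(i,\sqrt5)$, let $\tau=(1+\sqrt5)/2$, and let $\sigma$ be the automorphism of $E$ with $\sigma(i)=i$ and $\sigma(\sqrt5)=-\sqrt5$. For a real number $N\ge 1$ let $\mathbf{L}(N)$ be the set of numbers $x=(a+bi)+(c+di)\tau\in E$ with $a,b,c,d\in\mathbb{Z}$ and $|a|,|b|,|c|,|d|\le N$. For $x_1,x_2\in E$ put $$X(x_1,x_2)=\begin{pmatrix} x_1 & \sigma(x_1)\\ i\,x_2 & \sigma(x_2)\end{pmatrix},\qquad D(N_1,N_2)=\min_{x_1\in\mathbf{L}(N_1)\setminus\{0\},\ x_2\in\mathbf{L}(N_2)\setminus\{0\}}\left|\det X(x_1,x_2)\right|.$$ Then there exists a constant $K>0$ such that for all $N\ge1$, $$D(N^{3/5},N^{2/5})\le\frac{K}{N}.$$ In particular, there exist constants $C_\ell,C_u>0$ such that for all sufficiently large $N$, $$\frac{C_\ell}{N^2}\le D(N,N)\le\frac{C_u}{N^{5/3}},$$ i.e. the decay exponent of this code lies between $5/3$ and $2$.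
   Context: This is the two-user single-antenna Badr–Belfiore multiuser MIMO code; $\det X(x_1,x_2)\neq0$ whenever $x_1,x_2\neq0$. A code is said to decay with exponent at least $\delta_1$ if $D(N,N)\le C_uN^{-\delta_1}$ and with exponent at most $\delta_2$ if $D(N,N)\ge C_\ell N^{-\delta_2}$, for positive constants $C_u,C_\ell$. *)

theory Defs
  imports Complex_Main
begin

text \<open>Elements of E = Q(i, sqrt 5) are viewed as complex numbers.
  The lattice points (a+bi)+(c+di)tau are parametrised by integer quadruples.\<close>

definition tau :: real where "tau = (1 + sqrt 5) / 2"

text \<open>sigma fixes i and sends sqrt 5 to - sqrt 5, hence tau to (1 - sqrt 5)/2.\<close>
definition tau_conj :: real where "tau_conj = (1 - sqrt 5) / 2"

type_synonym quad = "int \<times> int \<times> int \<times> int"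

fun latval :: "quad \<Rightarrow> complex" where
  "latval (a, b, c, d) = Complex (of_int a) (of_int b) + Complex (of_int c) (of_int d) * complex_of_real tau"

fun latsigma :: "quad \<Rightarrow> complex" where
  "latsigma (a, b, c, d) = Complex (of_int a) (of_int b) + Complex (of_int c) (of_int d) * complex_of_real tau_conj"

definition Lquad :: "real \<Rightarrow> quad set" where
  "Lquad N = {(a, b, c, d). \<bar>of_int a\<bar> \<le> N \<and> \<bar>of_int b\<bar> \<le> N \<and> \<bar>of_int c\<bar> \<le> N \<and> \<bar>of_int d\<bar> \<le> N}"

definition detX :: "quad \<Rightarrow> quad \<Rightarrow> complex" where
  "detX q1 q2 = latval q1 * latsigma q2 - \<i> * latval q2 * latsigma q1"

definition Dmin :: "real \<Rightarrow> real \<Rightarrow> real" where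
  "Dmin N1 N2 = Min {cmod (detX q1 q2) | q1 q2.
      q1 \<in> Lquad N1 \<and> q2 \<in> Lquad N2 \<and> latval q1 \<noteq> 0 \<and> latval q2 \<noteq> 0}"

end

theory Submission
  imports Defs "HOL-Computational_Algebra.Primes"
begin

text \<open>
  On \<open>L(N)\<close> both \<open>|x|\<close> and \<open>|\<sigma> x|\<close> are \<open>O(N)\<close>, and conversely the coefficients of
  \<open>x \<in> \<int>[i][\<tau>]\<close> are at most \<open>3 (|x| + |\<sigma> x|)\<close>.
  The product of \<open>det X(x1, x2)\<close> with its conjugate \<open>\<sigma> (det X(x1, x2))\<close> is fixed by \<open>\<sigma>\<close>,
  hence a Gaussian integer, and it is nonzero because \<open>sqrt 5\<close> is irrational; so
  \<open>|det X| \<ge> 1 / |\<sigma> (det X)| \<ge> 1 / (72 N\<^sup>2)\<close>.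
  For the upper bound, the unit \<open>U = \<tau>^(2n)\<close> with \<open>\<sigma> U = U^(-1)\<close> produces
  \<open>x1 \<in> L(36 U^3)\<close> and \<open>x2 \<in> L(36 U^2)\<close> with \<open>|det X| = 2 U^(-5)\<close>; choosing
  \<open>U \<approx> N^(1/5)\<close> gives \<open>D(N^(3/5), N^(2/5)) = O(1/N)\<close>, and then
  \<open>D(N, N) \<le> D(N, N^(2/3)) = O(N^(-5/3))\<close>.
\<close>

lemma tau_plus_tau_conj: "tau + tau_conj = 1"
  unfolding tau_def tau_conj_def by (simp add: field_simps)

lemma tau_times_tau_conj: "tau * tau_conj = -1"
  unfolding tau_def tau_conj_def by (simp add: field_simps)

lemma tau_minus_tau_conj: "tau - tau_conj = sqrt 5"
  unfolding tau_def tau_conj_def by (simp add: field_simps)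

lemma tau_square: "tau\<^sup>2 = tau + 1"
  unfolding tau_def by (simp add: field_simps power2_eq_square)

lemma tau_conj_square: "tau_conj\<^sup>2 = tau_conj + 1"
  unfolding tau_conj_def by (simp add: field_simps power2_eq_square)

lemma tau_bounds: "1 < tau" "tau < 2"
proof -
  have "2 < sqrt 5" by (rule real_less_rsqrt) simp
  moreover have "sqrt 5 < 3" by (rule real_less_lsqrt) simp_all
  ultimately show "1 < tau" "tau < 2" unfolding tau_def by simp_all
qed

lemma tau_conj_bounds: "-1 < tau_conj" "tau_conj < 0"
  using tau_plus_tau_conj tau_bounds by linarith+

lemma square_eq_five_times_square:
  fixes m n :: int
  assumes "m\<^sup>2 = 5 * n\<^sup>2"
  shows "n = 0"
proof (rule ccontr)
  assume "n \<noteq> 0"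
  then have "m \<noteq> 0" using assms by auto
  have "multiplicity 5 (m\<^sup>2) = 2 * multiplicity 5 m"
    using \<open>m \<noteq> 0\<close> by (simp add: prime_elem_multiplicity_power_distrib)
  moreover have "multiplicity 5 (5 * n\<^sup>2) = Suc (2 * multiplicity 5 n)"
    using \<open>n \<noteq> 0\<close>
    by (simp add: prime_elem_multiplicity_mult_distrib prime_elem_multiplicity_power_distrib)
  ultimately have "2 * multiplicity 5 m = Suc (2 * multiplicity 5 n)"
    using assms by simp
  then show False by presburger
qed

lemma int_plus_int_times_tau_eq_0:
  fixes m n :: int
  assumes "of_int m + of_int n * tau = 0"
  shows "m = 0" "n = 0"
proof -
  have "of_int (2 * m + n) = - of_int n * sqrt 5"
    using assms unfolding tau_def by (simp add: field_simps)
  then have "of_int ((2 * m + n)\<^sup>2) = (of_int (5 * n\<^sup>2) :: real)"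
    by (simp add: power_mult_distrib)
  then show "n = 0"
    by (intro square_eq_five_times_square[of "2 * m + n"]) (simp only: of_int_eq_iff)
  then show "m = 0" using assms by simp
qed

definition gaussian_int :: "complex \<Rightarrow> bool" where
  "gaussian_int z \<longleftrightarrow> Re z \<in> \<int> \<and> Im z \<in> \<int>"

lemma gaussian_int_Complex: "gaussian_int (Complex (of_int a) (of_int b))"
  and gaussian_int_0: "gaussian_int 0"
  and gaussian_int_1: "gaussian_int 1"
  and gaussian_int_imaginary_unit: "gaussian_int \<i>"
  by (auto simp: gaussian_int_def)

lemma gaussian_int_add: "gaussian_int a \<Longrightarrow> gaussian_int b \<Longrightarrow> gaussian_int (a + b)"
  and gaussian_int_diff: "gaussian_int a \<Longrightarrow> gaussian_int b \<Longrightarrow> gaussian_int (a - b)"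
  and gaussian_int_minus: "gaussian_int a \<Longrightarrow> gaussian_int (- a)"
  and gaussian_int_mult: "gaussian_int a \<Longrightarrow> gaussian_int b \<Longrightarrow> gaussian_int (a * b)"
  by (auto simp: gaussian_int_def)

lemma gaussian_intE:
  assumes "gaussian_int z"
  obtains a b :: int where "z = Complex (of_int a) (of_int b)"
  using assms unfolding gaussian_int_def by (metis Ints_cases complex.exhaust_sel)

lemma gaussian_int_norm_ge_1:
  assumes "gaussian_int z" "z \<noteq> 0"
  shows "1 \<le> cmod z"
proof -
  obtain a b :: int where z: "z = Complex (of_int a) (of_int b)"
    using assms(1) by (rule gaussian_intE)
  then have "a \<noteq> 0 \<or> b \<noteq> 0" using assms(2) by (auto simp: complex_eq_iff)
  then have "1 \<le> a\<^sup>2 + b\<^sup>2"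
    by (metis add.commute add_increasing int_one_le_iff_zero_less zero_le_power2 zero_less_power2)
  then have "1 \<le> (of_int a)\<^sup>2 + (of_int b :: real)\<^sup>2"
    by (metis of_int_add of_int_le_iff of_int_1 of_int_power)
  then show ?thesis unfolding z cmod_def by simp
qed

text \<open>The automorphism \<open>\<sigma>\<close> is not defined on all of \<open>\<complex>\<close>, so it is modelled as a relation:
  \<open>sigma_pair z w\<close> means that \<open>z \<in> \<int>[i][\<tau>]\<close> and \<open>w = \<sigma> z\<close>.\<close>
definition sigma_pair :: "complex \<Rightarrow> complex \<Rightarrow> bool" where
  "sigma_pair z w \<longleftrightarrow> (\<exists>u v. gaussian_int u \<and> gaussian_int v
      \<and> z = u + v * of_real tau \<and> w = u + v * of_real tau_conj)"

lemma sigma_pairI: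
  "gaussian_int u \<Longrightarrow> gaussian_int v \<Longrightarrow> z = u + v * of_real tau \<Longrightarrow> w = u + v * of_real tau_conj
    \<Longrightarrow> sigma_pair z w"
  unfolding sigma_pair_def by blast

lemma sigma_pairE:
  assumes "sigma_pair z w"
  obtains u v where "gaussian_int u" "gaussian_int v"
    "z = u + v * of_real tau" "w = u + v * of_real tau_conj"
  using assms unfolding sigma_pair_def by blast

lemma sigma_pair_add: "sigma_pair a b \<Longrightarrow> sigma_pair c d \<Longrightarrow> sigma_pair (a + c) (b + d)"
proof (elim sigma_pairE)
  fix u v u' v'
  assume "gaussian_int u" "gaussian_int v" "gaussian_int u'" "gaussian_int v'"
    and "a = u + v * of_real tau" "b = u + v * of_real tau_conj"
    and "c = u' + v' * of_real tau" "d = u' + v' * of_real tau_conj"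
  then show "sigma_pair (a + c) (b + d)"
    by (intro sigma_pairI[of "u + u'" "v + v'"]) (simp_all add: gaussian_int_add algebra_simps)
qed

lemma sigma_pair_diff: "sigma_pair a b \<Longrightarrow> sigma_pair c d \<Longrightarrow> sigma_pair (a - c) (b - d)"
proof (elim sigma_pairE)
  fix u v u' v'
  assume "gaussian_int u" "gaussian_int v" "gaussian_int u'" "gaussian_int v'"
    and "a = u + v * of_real tau" "b = u + v * of_real tau_conj"
    and "c = u' + v' * of_real tau" "d = u' + v' * of_real tau_conj"
  then show "sigma_pair (a - c) (b - d)"
    by (intro sigma_pairI[of "u - u'" "v - v'"]) (simp_all add: gaussian_int_diff algebra_simps)
qed

lemma mult_in_golden_extension:
  fixes t :: "'a :: comm_ring_1"
  assumes "t * t = t + 1"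
  shows "(u + v * t) * (u' + v' * t) = (u * u' + v * v') + (u * v' + v * u' + v * v') * t"
proof -
  have "(u + v * t) * (u' + v' * t) = u * u' + (u * v' + v * u') * t + v * v' * (t * t)"
    by (simp add: algebra_simps)
  then show ?thesis unfolding assms by (simp add: algebra_simps)
qed

lemma sigma_pair_mult: "sigma_pair a b \<Longrightarrow> sigma_pair c d \<Longrightarrow> sigma_pair (a * c) (b * d)"
proof (elim sigma_pairE)
  fix u v u' v'
  assume uv: "gaussian_int u" "gaussian_int v" "gaussian_int u'" "gaussian_int v'"
    and "a = u + v * of_real tau" "b = u + v * of_real tau_conj"
    and "c = u' + v' * of_real tau" "d = u' + v' * of_real tau_conj"
  moreover have "of_real tau * of_real tau = (of_real tau + 1 :: complex)"
    "of_real tau_conj * of_real tau_conj = (of_real tau_conj + 1 :: complex)"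
    using tau_square tau_conj_square by (metis of_real_1 of_real_add of_real_mult power2_eq_square)+
  ultimately show "sigma_pair (a * c) (b * d)"
    by (intro sigma_pairI[of "u * u' + v * v'" "u * v' + v * u' + v * v'"])
       (simp_all add: gaussian_int_add gaussian_int_mult mult_in_golden_extension)
qed

lemma sigma_pair_1: "sigma_pair 1 1"
  by (rule sigma_pairI[of 1 0]) (simp_all add: gaussian_int_0 gaussian_int_1)

lemma sigma_pair_power: "sigma_pair a b \<Longrightarrow> sigma_pair (a ^ n) (b ^ n)"
  by (induction n) (simp_all add: sigma_pair_mult sigma_pair_1)

lemma sigma_pair_imaginary_unit: "sigma_pair \<i> \<i>"
  by (rule sigma_pairI[of \<i> 0]) (simp_all add: gaussian_int_imaginary_unit gaussian_int_0)

lemma sigma_pair_tau: "sigma_pair (of_real tau) (of_real tau_conj)"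
  by (rule sigma_pairI[of 0 1]) (simp_all add: gaussian_int_0 gaussian_int_1)

lemma sigma_pair_sym: "sigma_pair a b \<Longrightarrow> sigma_pair b a"
proof (elim sigma_pairE)
  fix u v assume uv: "gaussian_int u" "gaussian_int v"
    and a: "a = u + v * of_real tau" and b: "b = u + v * of_real tau_conj"
  have "v * of_real tau + v * of_real tau_conj = v"
    using tau_plus_tau_conj by (metis distrib_left mult.right_neutral of_real_1 of_real_add)
  then have "b = (u + v) + (- v) * of_real tau" "a = (u + v) + (- v) * of_real tau_conj"
    unfolding a b by (simp_all add: algebra_simps)
  with uv show "sigma_pair b a"
    by (intro sigma_pairI[of "u + v" "- v"]) (simp_all only: gaussian_int_add gaussian_int_minus)
qed

lemma sigma_pair_eq_0: "sigma_pair z w \<Longrightarrow> z = 0 \<Longrightarrow> w = 0"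
proof (elim sigma_pairE)
  fix u v assume uv: "gaussian_int u" "gaussian_int v"
    and "z = 0" "z = u + v * of_real tau" "w = u + v * of_real tau_conj"
  obtain a b :: int where u: "u = Complex (of_int a) (of_int b)"
    using uv(1) by (rule gaussian_intE)
  obtain c d :: int where v: "v = Complex (of_int c) (of_int d)"
    using uv(2) by (rule gaussian_intE)
  have "of_int a + of_int c * tau = 0" "of_int b + of_int d * tau = 0"
    using \<open>z = 0\<close> \<open>z = u + v * of_real tau\<close> unfolding u v by (simp_all add: complex_eq_iff)
  then have "u = 0" "v = 0"
    unfolding u v by (simp_all add: int_plus_int_times_tau_eq_0 complex_eq_iff)
  then show "w = 0" using \<open>w = u + v * of_real tau_conj\<close> by simp
qed

lemma sigma_pair_diag: "sigma_pair z z \<Longrightarrow> gaussian_int z"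
proof (elim sigma_pairE)
  fix u v assume "gaussian_int u" "z = u + v * of_real tau" "z = u + v * of_real tau_conj"
  then have "v * of_real tau = v * of_real tau_conj"
    by (metis add_left_cancel)
  moreover have "tau \<noteq> tau_conj"
    using tau_bounds tau_conj_bounds by simp
  ultimately have "v = 0" by (metis mult_cancel_left of_real_eq_iff)
  then show "gaussian_int z"
    using \<open>gaussian_int u\<close> \<open>z = u + v * of_real tau\<close> by simp
qed

lemma sigma_pair_latval: "sigma_pair (latval q) (latsigma q)"
proof -
  obtain a b c d where "q = (a, b, c, d)" by (cases q)
  then show ?thesis by (simp add: sigma_pairI[OF gaussian_int_Complex gaussian_int_Complex])
qed

lemma latsigma_eq_0: "latval q = 0 \<Longrightarrow> latsigma q = 0"
  by (rule sigma_pair_eq_0[OF sigma_pair_latval])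

lemma latsigma_nonzero: "latval q \<noteq> 0 \<Longrightarrow> latsigma q \<noteq> 0"
  using sigma_pair_eq_0[OF sigma_pair_sym[OF sigma_pair_latval]] by blast

lemma sigma_pair_latvalE:
  assumes "sigma_pair z w"
  obtains q where "latval q = z" "latsigma q = w"
proof -
  obtain u v where uv: "gaussian_int u" "gaussian_int v"
    "z = u + v * of_real tau" "w = u + v * of_real tau_conj"
    using assms by (rule sigma_pairE)
  obtain a b :: int where "u = Complex (of_int a) (of_int b)"
    using uv(1) by (rule gaussian_intE)
  moreover obtain c d :: int where "v = Complex (of_int c) (of_int d)"
    using uv(2) by (rule gaussian_intE)
  ultimately have "latval (a, b, c, d) = z" "latsigma (a, b, c, d) = w"
    using uv by simp_all
  then show ?thesis by (rule that)
qed

lemma abs_golden_coeffs_le: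
  fixes a c x y :: real
  assumes "x = a + c * tau" "y = a + c * tau_conj"
  shows "\<bar>c\<bar> \<le> \<bar>x\<bar> + \<bar>y\<bar>" "\<bar>a\<bar> \<le> 3 * (\<bar>x\<bar> + \<bar>y\<bar>)"
proof -
  have "x - y = c * (tau - tau_conj)"
    using assms by (simp add: algebra_simps)
  then have "\<bar>x - y\<bar> = \<bar>c\<bar> * sqrt 5"
    by (simp add: tau_minus_tau_conj abs_mult)
  moreover have "\<bar>c\<bar> \<le> \<bar>c\<bar> * sqrt 5"
    using mult_left_mono[of 1 "sqrt 5" "\<bar>c\<bar>"] by simp
  ultimately show c: "\<bar>c\<bar> \<le> \<bar>x\<bar> + \<bar>y\<bar>" by linarith
  have "\<bar>c * tau\<bar> \<le> \<bar>c\<bar> * 2"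
    unfolding abs_mult using tau_bounds by (intro mult_left_mono) simp_all
  moreover have "\<bar>a\<bar> \<le> \<bar>x\<bar> + \<bar>c * tau\<bar>"
    using abs_triangle_ineq4[of x "c * tau"] assms(1) by simp
  ultimately show "\<bar>a\<bar> \<le> 3 * (\<bar>x\<bar> + \<bar>y\<bar>)"
    using c abs_ge_zero[of y] by argo
qed

lemma in_Lquad_norm_bound: "q \<in> Lquad (3 * (cmod (latval q) + cmod (latsigma q)))"
proof -
  obtain a b c d where q: "q = (a, b, c, d)" by (cases q)
  let ?B = "cmod (latval q) + cmod (latsigma q)"
  have "\<bar>Re (latval q)\<bar> + \<bar>Re (latsigma q)\<bar> \<le> ?B" "\<bar>Im (latval q)\<bar> + \<bar>Im (latsigma q)\<bar> \<le> ?B"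
    using abs_Re_le_cmod abs_Im_le_cmod by (metis add_mono)+
  moreover have re: "Re (latval q) = of_int a + of_int c * tau" "Re (latsigma q) = of_int a + of_int c * tau_conj"
    and im: "Im (latval q) = of_int b + of_int d * tau" "Im (latsigma q) = of_int b + of_int d * tau_conj"
    by (simp_all add: q)
  ultimately have "\<bar>of_int a\<bar> \<le> 3 * ?B" "\<bar>of_int b\<bar> \<le> 3 * ?B"
    "\<bar>of_int c\<bar> \<le> 3 * ?B" "\<bar>of_int d\<bar> \<le> 3 * ?B"
    using abs_golden_coeffs_le[OF re] abs_golden_coeffs_le[OF im] by argo+
  then show ?thesis
    unfolding Lquad_def by (simp only: q mem_Collect_eq case_prod_conv)
qed

lemma norm_golden_lattice_point_le:
  assumes "\<bar>of_int a\<bar> \<le> N" "\<bar>of_int b\<bar> \<le> N" "\<bar>of_int c\<bar> \<le> N" "\<bar>of_int d\<bar> \<le> N"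
    and "\<bar>t\<bar> \<le> 2"
  shows "cmod (Complex (of_int a) (of_int b) + Complex (of_int c) (of_int d) * of_real t) \<le> 6 * N"
proof -
  have Complex_le: "cmod (Complex x y) \<le> \<bar>x\<bar> + \<bar>y\<bar>" for x y
    using cmod_le[of "Complex x y"] by (simp only: complex.sel)
  have "cmod (Complex (of_int c) (of_int d) * of_real t) \<le> cmod (Complex (of_int c) (of_int d)) * 2"
    unfolding norm_mult norm_of_real using assms(5) by (simp add: mult_left_mono)
  then show ?thesis
    using norm_triangle_ineq[of "Complex (of_int a) (of_int b)" "Complex (of_int c) (of_int d) * of_real t"]
      Complex_le[of "of_int a" "of_int b"] Complex_le[of "of_int c" "of_int d"] assms(1-4)
    by argo
qed

lemma norm_latval_latsigma_le:
  assumes "q \<in> Lquad N"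
  shows "cmod (latval q) \<le> 6 * N" "cmod (latsigma q) \<le> 6 * N"
proof -
  obtain a b c d where q: "q = (a, b, c, d)" by (cases q)
  have coeffs: "\<bar>of_int a\<bar> \<le> N" "\<bar>of_int b\<bar> \<le> N" "\<bar>of_int c\<bar> \<le> N" "\<bar>of_int d\<bar> \<le> N"
    using assms unfolding q Lquad_def by auto
  show "cmod (latval q) \<le> 6 * N"
    unfolding q latval.simps using tau_bounds by (intro norm_golden_lattice_point_le[OF coeffs]) simp
  show "cmod (latsigma q) \<le> 6 * N"
    unfolding q latsigma.simps using tau_conj_bounds by (intro norm_golden_lattice_point_le[OF coeffs]) simp
qed

lemma Lquad_mono: "q \<in> Lquad A \<Longrightarrow> A \<le> B \<Longrightarrow> q \<in> Lquad B"
  unfolding Lquad_def by auto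

definition sigma_detX :: "quad \<Rightarrow> quad \<Rightarrow> complex" where
  "sigma_detX q1 q2 = latsigma q1 * latval q2 - \<i> * latsigma q2 * latval q1"

lemma sigma_pair_detX: "sigma_pair (detX q1 q2) (sigma_detX q1 q2)"
  unfolding detX_def sigma_detX_def
  by (intro sigma_pair_diff sigma_pair_mult sigma_pair_imaginary_unit sigma_pair_latval
      sigma_pair_sym[OF sigma_pair_latval])

lemma detX_nonzero:
  assumes "latval q1 \<noteq> 0" "latval q2 \<noteq> 0"
  shows "detX q1 q2 \<noteq> 0"
proof
  assume det: "detX q1 q2 = 0"
  then have "sigma_detX q1 q2 = 0" using sigma_pair_eq_0[OF sigma_pair_detX] by blast
  with det have "latval q1 * latsigma q2 = \<i> * latval q2 * latsigma q1"
    "latsigma q1 * latval q2 = \<i> * latsigma q2 * latval q1"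
    unfolding detX_def sigma_detX_def by simp_all
  then have "(latval q1 * latsigma q2) * (latsigma q1 * latval q2)
      = - ((latval q1 * latsigma q2) * (latsigma q1 * latval q2))"
    by (simp add: algebra_simps)
  then show False
    using assms latsigma_nonzero by simp
qed

lemma norm_detX_mult_sigma_detX_ge_1:
  assumes "latval q1 \<noteq> 0" "latval q2 \<noteq> 0"
  shows "1 \<le> cmod (detX q1 q2) * cmod (sigma_detX q1 q2)"
proof -
  have det: "detX q1 q2 \<noteq> 0" using detX_nonzero[OF assms] .
  then have "sigma_detX q1 q2 \<noteq> 0"
    using sigma_pair_eq_0[OF sigma_pair_sym[OF sigma_pair_detX]] by blast
  moreover have "gaussian_int (detX q1 q2 * sigma_detX q1 q2)"
    using sigma_pair_mult[OF sigma_pair_detX sigma_pair_sym[OF sigma_pair_detX]]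
    by (intro sigma_pair_diag) (simp add: mult.commute)
  ultimately have "1 \<le> cmod (detX q1 q2 * sigma_detX q1 q2)"
    using det by (intro gaussian_int_norm_ge_1) simp_all
  then show ?thesis by (simp add: norm_mult)
qed

lemma norm_sigma_detX_le:
  assumes "q1 \<in> Lquad N" "q2 \<in> Lquad N"
  shows "cmod (sigma_detX q1 q2) \<le> 72 * N\<^sup>2"
proof -
  have "0 \<le> N" using norm_latval_latsigma_le(1)[OF assms(1)] norm_ge_zero[of "latval q1"] by linarith
  then have "cmod (latsigma q1) * cmod (latval q2) \<le> (6 * N) * (6 * N)"
    "cmod (latsigma q2) * cmod (latval q1) \<le> (6 * N) * (6 * N)"
    using norm_latval_latsigma_le[OF assms(1)] norm_latval_latsigma_le[OF assms(2)]
    by (intro mult_mono; simp)+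
  then show ?thesis
    unfolding sigma_detX_def
    using norm_triangle_ineq4[of "latsigma q1 * latval q2" "\<i> * latsigma q2 * latval q1"]
    by (simp add: norm_mult power2_eq_square)
qed

lemma norm_detX_lower_bound:
  assumes "q1 \<in> Lquad N" "q2 \<in> Lquad N" "latval q1 \<noteq> 0" "latval q2 \<noteq> 0"
  shows "1 / (72 * N\<^sup>2) \<le> cmod (detX q1 q2)"
proof -
  have prod: "1 \<le> cmod (detX q1 q2) * cmod (sigma_detX q1 q2)"
    using norm_detX_mult_sigma_detX_ge_1[OF assms(3,4)] .
  then have "0 < cmod (sigma_detX q1 q2)"
    by (metis mult_zero_right norm_ge_zero not_one_le_zero order_le_less)
  moreover have "cmod (sigma_detX q1 q2) \<le> 72 * N\<^sup>2"
    using norm_sigma_detX_le[OF assms(1,2)] .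
  moreover from calculation have "0 < 72 * N\<^sup>2" by linarith
  ultimately have "1 / (72 * N\<^sup>2) \<le> 1 / cmod (sigma_detX q1 q2)"
    by (intro divide_left_mono mult_pos_pos) simp_all
  also have "\<dots> \<le> cmod (detX q1 q2)"
    using prod \<open>0 < cmod (sigma_detX q1 q2)\<close> by (simp add: divide_le_eq mult.commute)
  finally show ?thesis .
qed

text \<open>With \<open>U = \<tau>^(2n)\<close>, \<open>V = \<sigma> U = 1/U\<close> and \<open>t = \<tau>\<close>, \<open>t' = \<sigma> \<tau>\<close>, the
  numbers \<open>x1 = cubic_witness U V t'\<close> and \<open>x2 = quadratic_witness U V t\<close> have size
  \<open>U^3\<close> and \<open>U^2\<close>, but \<open>det X(x1, x2) = -2 V^5\<close> is tiny.\<close>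
definition cubic_witness :: "complex \<Rightarrow> complex \<Rightarrow> complex \<Rightarrow> complex" where
  "cubic_witness U V t = \<i> * U ^ 3 + t * U - \<i> * t * V - V ^ 3"

definition quadratic_witness :: "complex \<Rightarrow> complex \<Rightarrow> complex \<Rightarrow> complex" where
  "quadratic_witness U V t = U\<^sup>2 - V\<^sup>2 - \<i> * t"

lemma witness_det_identity:
  assumes "t + t' = 1" "t * t' = -1" "U * V = 1"
  shows "cubic_witness U V t' * quadratic_witness V U t'
      - \<i> * quadratic_witness U V t * cubic_witness V U t = -2 * V ^ 5"
proof -
  have "\<i> * \<i> = (-1 :: complex)" by simp
  with assms show ?thesis
    unfolding cubic_witness_def quadratic_witness_def by algebra
qed

lemma sigma_pair_cubic_witness:
  assumes "sigma_pair U V" "sigma_pair t s"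
  shows "sigma_pair (cubic_witness U V t) (cubic_witness V U s)"
  unfolding cubic_witness_def
  by (intro sigma_pair_diff sigma_pair_add sigma_pair_mult sigma_pair_power sigma_pair_imaginary_unit
      assms sigma_pair_sym[OF assms(1)])

lemma sigma_pair_quadratic_witness:
  assumes "sigma_pair U V" "sigma_pair t s"
  shows "sigma_pair (quadratic_witness U V t) (quadratic_witness V U s)"
  unfolding quadratic_witness_def
  by (intro sigma_pair_diff sigma_pair_mult sigma_pair_power sigma_pair_imaginary_unit
      assms sigma_pair_sym[OF assms(1)])

lemma norm_cubic_witness_le:
  assumes "cmod U \<le> T" "cmod V \<le> T" "cmod t \<le> 2" "1 \<le> T"
  shows "cmod (cubic_witness U V t) \<le> 6 * T ^ 3"
proof -
  have "cmod (\<i> * U ^ 3) \<le> T ^ 3" "cmod (V ^ 3) \<le> T ^ 3"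
    unfolding norm_mult norm_power using assms by (simp_all add: power_mono)
  moreover have "cmod (t * U) \<le> 2 * T" "cmod (\<i> * t * V) \<le> 2 * T"
    unfolding norm_mult using assms by (simp_all add: mult_mono)
  moreover have "T \<le> T ^ 3"
    using assms(4) by (simp add: power_increasing[of 1 3 T, simplified])
  ultimately show ?thesis
    unfolding cubic_witness_def
    using norm_triangle_ineq4[of "\<i> * U ^ 3 + t * U - \<i> * t * V" "V ^ 3"]
      norm_triangle_ineq4[of "\<i> * U ^ 3 + t * U" "\<i> * t * V"]
      norm_triangle_ineq[of "\<i> * U ^ 3" "t * U"]
    by argo
qed

lemma norm_quadratic_witness_le:
  assumes "cmod U \<le> T" "cmod V \<le> T" "cmod t \<le> 2" "1 \<le> T"
  shows "cmod (quadratic_witness U V t) \<le> 4 * T\<^sup>2"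
proof -
  have "cmod (U\<^sup>2) \<le> T\<^sup>2" "cmod (V\<^sup>2) \<le> T\<^sup>2" "1 \<le> T\<^sup>2"
    unfolding norm_power using assms by (simp_all add: power_mono)
  then show ?thesis
    unfolding quadratic_witness_def
    using norm_triangle_ineq4[of "U\<^sup>2 - V\<^sup>2" "\<i> * t"] norm_triangle_ineq4[of "U\<^sup>2" "V\<^sup>2"] assms(3)
    by (simp add: norm_mult)
qed

lemma small_detX_witness:
  fixes n :: nat
  defines "T \<equiv> tau ^ (2 * n)"
  obtains q1 q2 where "q1 \<in> Lquad (36 * T ^ 3)" "q2 \<in> Lquad (36 * T\<^sup>2)"
    "latval q1 \<noteq> 0" "latval q2 \<noteq> 0" "cmod (detX q1 q2) = 2 / T ^ 5"
proof -
  have T: "1 \<le> T" unfolding T_def using tau_bounds by simp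
  then have inv_T: "1 / T \<le> T" by (simp add: order_trans[of _ 1])
  have unit: "T * tau_conj ^ (2 * n) = 1"
    unfolding T_def power_mult_distrib[symmetric] tau_times_tau_conj by (simp add: power_mult)
  then have conj_T: "tau_conj ^ (2 * n) = 1 / T" using T by (simp add: field_simps)
  define U V t t' where "U = complex_of_real T" "V = complex_of_real (tau_conj ^ (2 * n))"
    "t = complex_of_real tau" "t' = complex_of_real tau_conj"
  have UV: "sigma_pair U V"
    using sigma_pair_power[OF sigma_pair_tau, of "2 * n"]
    unfolding U_V_t_t'_def T_def of_real_power .
  have tt': "sigma_pair t t'" "sigma_pair t' t"
    unfolding U_V_t_t'_def using sigma_pair_tau sigma_pair_sym by blast+
  obtain q1 where q1: "latval q1 = cubic_witness U V t'" "latsigma q1 = cubic_witness V U t"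
    using sigma_pair_cubic_witness[OF UV tt'(2)] by (rule sigma_pair_latvalE)
  obtain q2 where q2: "latval q2 = quadratic_witness U V t" "latsigma q2 = quadratic_witness V U t'"
    using sigma_pair_quadratic_witness[OF UV tt'(1)] by (rule sigma_pair_latvalE)
  have "t + t' = 1" "t * t' = -1" "U * V = 1"
    unfolding U_V_t_t'_def using tau_plus_tau_conj tau_times_tau_conj unit
    by (simp_all flip: of_real_add of_real_mult of_real_power)
  then have det: "detX q1 q2 = -2 * V ^ 5"
    unfolding detX_def q1 q2 by (rule witness_det_identity)
  then have norm_det: "cmod (detX q1 q2) = 2 / T ^ 5"
    unfolding U_V_t_t'_def conj_T using T by (simp add: norm_divide norm_power power_one_over)
  have "detX q1 q2 \<noteq> 0"
    unfolding det U_V_t_t'_def conj_T using T by simp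
  then have nonzero: "latval q1 \<noteq> 0" "latval q2 \<noteq> 0"
    unfolding detX_def by (auto simp: latsigma_eq_0)
  have norms: "cmod U \<le> T" "cmod V \<le> T" "cmod t \<le> 2" "cmod t' \<le> 2"
    unfolding U_V_t_t'_def conj_T using T inv_T tau_bounds tau_conj_bounds by (auto simp: norm_divide)
  then have "3 * (cmod (latval q1) + cmod (latsigma q1)) \<le> 36 * T ^ 3"
    "3 * (cmod (latval q2) + cmod (latsigma q2)) \<le> 36 * T\<^sup>2"
    unfolding q1 q2
    using norm_cubic_witness_le[OF norms(1,2,4) T] norm_cubic_witness_le[OF norms(2,1,3) T]
      norm_quadratic_witness_le[OF norms(1,2,3) T] norm_quadratic_witness_le[OF norms(2,1,4) T]
      zero_le_power2[of T]
    by argo+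
  then have "q1 \<in> Lquad (36 * T ^ 3)" "q2 \<in> Lquad (36 * T\<^sup>2)"
    using in_Lquad_norm_bound Lquad_mono by blast+
  then show ?thesis using that nonzero norm_det by blast
qed

lemma finite_Lquad: "finite (Lquad N)"
proof -
  have "x \<in> {-\<lceil>N\<rceil>..\<lceil>N\<rceil>}" if "\<bar>of_int x\<bar> \<le> N" for x :: int
  proof -
    have "\<bar>x\<bar> \<le> \<lceil>N\<rceil>" using that by (metis ceiling_mono ceiling_of_int of_int_abs)
    then show ?thesis unfolding atLeastAtMost_iff abs_le_iff by linarith
  qed
  then have "Lquad N \<subseteq> {-\<lceil>N\<rceil>..\<lceil>N\<rceil>} \<times> {-\<lceil>N\<rceil>..\<lceil>N\<rceil>} \<times> {-\<lceil>N\<rceil>..\<lceil>N\<rceil>} \<times> {-\<lceil>N\<rceil>..\<lceil>N\<rceil>}"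
    unfolding Lquad_def by auto
  then show ?thesis by (rule finite_subset) simp
qed

lemma finite_detX_values:
  "finite {cmod (detX q1 q2) | q1 q2. q1 \<in> Lquad N1 \<and> q2 \<in> Lquad N2 \<and> latval q1 \<noteq> 0 \<and> latval q2 \<noteq> 0}"
proof (rule finite_subset)
  show "finite ((\<lambda>(q1, q2). cmod (detX q1 q2)) ` (Lquad N1 \<times> Lquad N2))"
    by (simp add: finite_Lquad)
qed auto

lemma Dmin_le:
  assumes "q1 \<in> Lquad N1" "q2 \<in> Lquad N2" "latval q1 \<noteq> 0" "latval q2 \<noteq> 0"
  shows "Dmin N1 N2 \<le> cmod (detX q1 q2)"
  unfolding Dmin_def by (rule Min_le[OF finite_detX_values]) (use assms in blast)

lemma unit_in_Lquad: "1 \<le> N \<Longrightarrow> (1, 0, 0, 0) \<in> Lquad N"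
  unfolding Lquad_def by simp

lemma latval_unit: "latval (1, 0, 0, 0) = 1" and latsigma_unit: "latsigma (1, 0, 0, 0) = 1"
  by (simp_all add: complex_eq_iff)

lemma Dmin_greatest:
  assumes "1 \<le> N1" "1 \<le> N2"
    and "\<And>q1 q2. q1 \<in> Lquad N1 \<Longrightarrow> q2 \<in> Lquad N2 \<Longrightarrow> latval q1 \<noteq> 0 \<Longrightarrow> latval q2 \<noteq> 0
      \<Longrightarrow> c \<le> cmod (detX q1 q2)"
  shows "c \<le> Dmin N1 N2"
  unfolding Dmin_def
proof (rule Min.boundedI[OF finite_detX_values])
  show "{cmod (detX q1 q2) | q1 q2.
      q1 \<in> Lquad N1 \<and> q2 \<in> Lquad N2 \<and> latval q1 \<noteq> 0 \<and> latval q2 \<noteq> 0} \<noteq> {}"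
    using unit_in_Lquad latval_unit assms(1,2) by fastforce
qed (use assms(3) in blast)

lemma Dmin_antimono:
  assumes "1 \<le> N1" "1 \<le> N2" "N1 \<le> N1'" "N2 \<le> N2'"
  shows "Dmin N1' N2' \<le> Dmin N1 N2"
  using assms by (intro Dmin_greatest Dmin_le) (auto intro: Lquad_mono)

lemma Dmin_le_2:
  assumes "1 \<le> N1" "1 \<le> N2"
  shows "Dmin N1 N2 \<le> 2"
proof -
  have "Dmin N1 N2 \<le> cmod (detX (1, 0, 0, 0) (1, 0, 0, 0))"
    using assms by (intro Dmin_le unit_in_Lquad) (simp_all del: latval.simps add: latval_unit)
  also have "\<dots> = cmod (1 - \<i>)"
    unfolding detX_def latval_unit latsigma_unit by simp
  also have "\<dots> \<le> 2"
    using norm_triangle_ineq4[of 1 \<i>] by simp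
  finally show ?thesis .
qed

lemma Dmin_lower_bound:
  assumes "1 \<le> N"
  shows "1 / (72 * N\<^sup>2) \<le> Dmin N N"
  using assms by (intro Dmin_greatest norm_detX_lower_bound)

lemma power_bracket:
  fixes b M :: real
  assumes "1 < b" "1 \<le> M"
  obtains n where "b ^ n \<le> M" "M < b ^ Suc n"
proof -
  obtain k where "M < b ^ k" using real_arch_pow[OF assms(1)] by blast
  define m where "m = (LEAST k. M < b ^ k)"
  have "M < b ^ m" unfolding m_def by (rule LeastI) fact
  moreover from this have "m \<noteq> 0" using assms(2) by (intro notI) simp
  then obtain n where m: "m = Suc n" using not0_implies_Suc by blast
  moreover have "\<not> M < b ^ n"
    using not_less_Least[of n "\<lambda>k. M < b ^ k"] unfolding m_def[symmetric] m by simp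
  ultimately show ?thesis using that by (metis not_less)
qed

lemma Dmin_scaled_witness:
  assumes "36 ^ 5 \<le> N"
  shows "Dmin (N powr (3/5)) (N powr (2/5)) \<le> 2 * 36 ^ 5 * tau ^ 10 / N"
proof -
  define P where "P = N powr (1/5)"
  have N: "1 \<le> N" using assms by simp
  have P_power: "P ^ k = N powr (real k / 5)" for k
    unfolding P_def using N by (simp add: powr_power)
  have "36 ^ 5 \<le> P ^ 5" using assms P_power[of 5] by simp
  then have "36 \<le> P" by (subst (asm) power_mono_iff) (simp_all add: P_def)
  then obtain n where n: "(tau\<^sup>2) ^ n \<le> P / 36" "P / 36 < (tau\<^sup>2) ^ Suc n"
    using power_bracket[of "tau\<^sup>2" "P / 36"] tau_bounds by (auto simp: one_less_power)
  define T where "T = tau ^ (2 * n)"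
  have "T = (tau\<^sup>2) ^ n" unfolding T_def by (rule power_mult)
  then have T: "1 \<le> T" "36 * T \<le> P" "P < 36 * T * tau\<^sup>2"
    using n tau_bounds by (simp_all add: field_simps)
  obtain q1 q2 where q: "q1 \<in> Lquad (36 * T ^ 3)" "q2 \<in> Lquad (36 * T\<^sup>2)"
    "latval q1 \<noteq> 0" "latval q2 \<noteq> 0" "cmod (detX q1 q2) = 2 / T ^ 5"
    using small_detX_witness[of n] unfolding T_def by blast
  have "36 * T ^ k \<le> N powr (real k / 5)" if "1 \<le> k" for k
  proof -
    have "36 * T ^ k \<le> 36 ^ k * T ^ k"
      using T(1) power_increasing[OF that, of "36 :: real"] by (intro mult_right_mono) simp_all
    also have "\<dots> \<le> P ^ k"
      unfolding power_mult_distrib[symmetric] using T by (intro power_mono) simp_all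
    finally show ?thesis unfolding P_power .
  qed
  from this[of 3] this[of 2] have "q1 \<in> Lquad (N powr (3/5))" "q2 \<in> Lquad (N powr (2/5))"
    using q(1,2) Lquad_mono by simp_all
  then have "Dmin (N powr (3/5)) (N powr (2/5)) \<le> 2 / T ^ 5"
    using Dmin_le q(3-5) by metis
  also have "\<dots> \<le> 2 * 36 ^ 5 * tau ^ 10 / N"
  proof -
    have "N = P ^ 5" using P_power[of 5] N by simp
    also have "\<dots> < (36 * T * tau\<^sup>2) ^ 5"
      using T \<open>36 \<le> P\<close> by (intro power_strict_mono) simp_all
    finally have "N < (36 * T * tau\<^sup>2) ^ 5" .
    then show ?thesis
      using T(1) N by (simp add: field_simps power_mult_distrib flip: power_mult)
  qed
  finally show ?thesis .
qed

lemma Dmin_upper_bound: "\<exists>K>0. \<forall>N::real. N \<ge> 1 \<longrightarrow> Dmin (N powr (3/5)) (N powr (2/5)) \<le> K / N"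
proof (intro exI conjI allI impI)
  show "0 < 2 * 36 ^ 5 * tau ^ 10" using tau_bounds by simp
  fix N :: real assume N: "1 \<le> N"
  show "Dmin (N powr (3/5)) (N powr (2/5)) \<le> 2 * 36 ^ 5 * tau ^ 10 / N"
  proof (cases "36 ^ 5 \<le> N")
    case True
    then show ?thesis by (rule Dmin_scaled_witness)
  next
    case False
    then have "2 * N \<le> 2 * 36 ^ 5 * tau ^ 10"
      using tau_bounds by (simp add: order_trans[OF _ mult_left_mono[of 1 "tau ^ 10"]])
    then have "2 \<le> 2 * 36 ^ 5 * tau ^ 10 / N"
      using N by (simp add: field_simps)
    moreover have "Dmin (N powr (3/5)) (N powr (2/5)) \<le> 2"
      using N by (intro Dmin_le_2) (simp_all add: ge_one_powr_ge_zero)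
    ultimately show ?thesis by linarith
  qed
qed

lemma Dmin_diagonal_upper_bound:
  assumes K: "\<And>N. 1 \<le> N \<Longrightarrow> Dmin (N powr (3/5)) (N powr (2/5)) \<le> K / N"
    and N: "1 \<le> N"
  shows "Dmin N N \<le> K / N powr (5/3)"
proof -
  define M where "M = N powr (5/3)"
  have M: "1 \<le> M" "M powr (3/5) = N" "M powr (2/5) = N powr (2/3)"
    unfolding M_def using N by (simp_all add: powr_powr ge_one_powr_ge_zero)
  have "1 \<le> N powr (2/3)" "N powr (2/3) \<le> N"
    using N powr_mono[of "2/3" 1 N] by (simp_all add: ge_one_powr_ge_zero)
  then have "Dmin N N \<le> Dmin (M powr (3/5)) (M powr (2/5))"
    unfolding M using N by (intro Dmin_antimono) simp_all
  also have "\<dots> \<le> K / M" using K M(1) .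
  finally show ?thesis unfolding M_def .
qed

theorem corollary3p2:
  shows "(\<exists>K>0. \<forall>N::real. N \<ge> 1 \<longrightarrow> Dmin (N powr (3/5)) (N powr (2/5)) \<le> K / N)
       \<and> (\<exists>Cl>0. \<exists>Cu>0. \<forall>\<^sub>F N in at_top.
            Cl / N\<^sup>2 \<le> Dmin N N \<and> Dmin N N \<le> Cu / N powr (5/3))"
proof -
  obtain K where K: "K > 0" "\<And>N. 1 \<le> N \<Longrightarrow> Dmin (N powr (3/5)) (N powr (2/5)) \<le> K / N"
    using Dmin_upper_bound by blast
  have "\<forall>\<^sub>F N in at_top. 1 / 72 / N\<^sup>2 \<le> Dmin N N \<and> Dmin N N \<le> K / N powr (5/3)"
    using eventually_ge_at_top[of "1 :: real"]
  proof (rule eventually_mono)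
    fix N :: real assume "1 \<le> N"
    then show "1 / 72 / N\<^sup>2 \<le> Dmin N N \<and> Dmin N N \<le> K / N powr (5/3)"
      using Dmin_lower_bound[of N] Dmin_diagonal_upper_bound[OF K(2), of N]
      by (simp add: divide_divide_eq_left)
  qed
  moreover have "(0 :: real) < 1 / 72" by simp
  ultimately show ?thesis
    using Dmin_upper_bound K(1) by blast
qed

end
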